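(* Let $\Omega\subset\mathbb{C}$ be a simply connected domain, let $g:\Omega\to\mathbb{C}\setminus\{0\}$ be holomorphic, and let $\mathcal{A},\mathcal{B}:\Omega\to\mathbb{R}$ be $\mathcal{C}^2$ functions satisfying $$\mathcal{A}_{z\overline z}=\frac{-1+|g|^2}{1+|g|^2}\,\mathcal{B}_{z\overline z}\quad\text{and}\quad \mathcal{A}_z\neq\frac{-1+|g|^2}{1+|g|^2}\,\mathcal{B}_z\ \text{ at every point of }\Omega.$$ Then there exists a map $\mathbf{X}=(\mathbf{x}_1,\mathbf{x}_2,\mathbf{x}_3,\mathbf{x}_4):\Omega\to\mathbb{L}^4$ (unique up to an additive constant vector) with $$\mathbf{X}_z=\mathcal{A}_z\begin{bmatrix}\frac12\left(\frac1g-g\right)\\ \frac i2\left(\frac1g+g\right)\\ 1\\ 0\end{bmatrix}+\mathcal{B}_z\begin{bmatrix}\frac12\left(\frac1g+g\right)\\ \frac i2\left(\frac1g-g\right)\\ 0\\ 1\end{bmatrix},$$ which is a conformal spacelike immersion parameterizing a marginally trapped surface in $\mathbb{L}^4$, such that: up to additive constants $\mathbf{x}_3=\mathcal{A}$ and $\mathbf{x}_4=\mathcal{B}$; the vector $\mathcal{G}:=\big(2\,\mathrm{Re}\,g,\;2\,\mathrm{Im}\,g,\;-1+|g|^2,\;1+|g|^2\big)^T$ satisfies $\langle\mathbf{X}_z,\mathcal{G}\rangle=0$; and the induced metric is $$ds^2=\left(|g|+\frac{1}{|g|}\right)^2\left|\mathcal{A}_z-\frac{-1+|g|^2}{1+|g|^2}\,\mathcal{B}_z\right|^2|dz|^2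 .$$
   Context: $\Omega\subset\mathbb{R}^2\equiv\mathbb{C}$ has complex coordinate $z=u+iv$, and $\partial_z=\frac12(\partial_u-i\partial_v)$, $\partial_{\overline z}=\frac12(\partial_u+i\partial_v)$; subscripts denote partial derivatives. $\mathbb{L}^4$ is $\mathbb{R}^4$ with the Lorentzian metric $\langle x,y\rangle=x_1y_1+x_2y_2+x_3y_3-x_4y_4$; this form is extended complex-bilinearly to $\mathbb{C}^4$. A map $\mathbf{X}:\Omega\to\mathbb{L}^4$ is a conformal spacelike immersion with metric $\Lambda|dz|^2=\Lambda(du^2+dv^2)$, $\Lambda>0$, iff $\langle\mathbf{X}_z,\mathbf{X}_z\rangle=0$ and $\Lambda=2\langle\mathbf{X}_z,\overline{\mathbf{X}_z}\rangle>0$. Its mean curvature vector is $\mathbf{H}=\Delta_{ds^2}\mathbf{X}=\frac{4}{\Lambda}\mathbf{X}_{z\overline z}$. A spacelike surface is marginally trapped if $\langle\mathbf{H},\mathbf{H}\rangle=0$. *)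

theory Defs
  imports "HOL-Analysis.Analysis"
begin

definition pu :: "(complex \<Rightarrow> 'a::real_normed_vector) \<Rightarrow> complex \<Rightarrow> 'a" where
  "pu f z = vector_derivative (\<lambda>t::real. f (z + of_real t)) (at 0)"

definition pv :: "(complex \<Rightarrow> 'a::real_normed_vector) \<Rightarrow> complex \<Rightarrow> 'a" where
  "pv f z = vector_derivative (\<lambda>t::real. f (z + \<i> * of_real t)) (at 0)"

definition C1_on :: "complex set \<Rightarrow> (complex \<Rightarrow> 'a::real_normed_vector) \<Rightarrow> bool" where
  "C1_on S f \<longleftrightarrow>
     (\<forall>z\<in>S. (\<lambda>t::real. f (z + of_real t)) differentiable (at 0)
          \<and> (\<lambda>t::real. f (z + \<i> * of_real t)) differentiable (at 0))
     \<and> continuous_on S (pu f) \<and> continuous_on S (pv f)"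

definition C2_on :: "complex set \<Rightarrow> (complex \<Rightarrow> 'a::real_normed_vector) \<Rightarrow> bool" where
  "C2_on S f \<longleftrightarrow> C1_on S f \<and> C1_on S (pu f) \<and> C1_on S (pv f)"

definition wz :: "(complex \<Rightarrow> complex) \<Rightarrow> complex \<Rightarrow> complex" where
  "wz f z = (pu f z - \<i> * pv f z) / 2"

definition wzb :: "(complex \<Rightarrow> complex) \<Rightarrow> complex \<Rightarrow> complex" where
  "wzb f z = (pu f z + \<i> * pv f z) / 2"

definition cr :: "(complex \<Rightarrow> real) \<Rightarrow> complex \<Rightarrow> complex" where
  "cr f = (\<lambda>z. complex_of_real (f z))"

section \<open>Lorentz form on C^4 (complex-bilinear extension of the L^4 metric)\<close>

type_synonym c4 = "complex \<times> complex \<times> complex \<times> complex"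

fun lor :: "c4 \<Rightarrow> c4 \<Rightarrow> complex" where
  "lor (a1, a2, a3, a4) (b1, b2, b3, b4) = a1 * b1 + a2 * b2 + a3 * b3 - a4 * b4"

fun cnj4 :: "c4 \<Rightarrow> c4" where
  "cnj4 (a1, a2, a3, a4) = (cnj a1, cnj a2, cnj a3, cnj a4)"

fun scale4 :: "complex \<Rightarrow> c4 \<Rightarrow> c4" where
  "scale4 c (a1, a2, a3, a4) = (c * a1, c * a2, c * a3, c * a4)"

definition Xz :: "(complex \<Rightarrow> real) \<Rightarrow> (complex \<Rightarrow> real) \<Rightarrow> (complex \<Rightarrow> real) \<Rightarrow> (complex \<Rightarrow> real)
   \<Rightarrow> complex \<Rightarrow> c4" where
  "Xz x1 x2 x3 x4 z = (wz (cr x1) z, wz (cr x2) z, wz (cr x3) z, wz (cr x4) z)"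

definition Xzzb :: "(complex \<Rightarrow> real) \<Rightarrow> (complex \<Rightarrow> real) \<Rightarrow> (complex \<Rightarrow> real) \<Rightarrow> (complex \<Rightarrow> real)
   \<Rightarrow> complex \<Rightarrow> c4" where
  "Xzzb x1 x2 x3 x4 z = (wz (wzb (cr x1)) z, wz (wzb (cr x2)) z,
                         wz (wzb (cr x3)) z, wz (wzb (cr x4)) z)"

definition Lam :: "(complex \<Rightarrow> real) \<Rightarrow> (complex \<Rightarrow> real) \<Rightarrow> (complex \<Rightarrow> real) \<Rightarrow> (complex \<Rightarrow> real)
   \<Rightarrow> complex \<Rightarrow> complex" where
  "Lam x1 x2 x3 x4 z = 2 * lor (Xz x1 x2 x3 x4 z) (cnj4 (Xz x1 x2 x3 x4 z))"

definition conformal_spacelike_immersion ::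
  "complex set \<Rightarrow> (complex \<Rightarrow> real) \<Rightarrow> (complex \<Rightarrow> real) \<Rightarrow> (complex \<Rightarrow> real) \<Rightarrow> (complex \<Rightarrow> real) \<Rightarrow> bool" where
  "conformal_spacelike_immersion S x1 x2 x3 x4 \<longleftrightarrow>
     (\<forall>z\<in>S. lor (Xz x1 x2 x3 x4 z) (Xz x1 x2 x3 x4 z) = 0
            \<and> Im (Lam x1 x2 x3 x4 z) = 0 \<and> Re (Lam x1 x2 x3 x4 z) > 0)"

definition Hvec :: "(complex \<Rightarrow> real) \<Rightarrow> (complex \<Rightarrow> real) \<Rightarrow> (complex \<Rightarrow> real) \<Rightarrow> (complex \<Rightarrow> real)
   \<Rightarrow> complex \<Rightarrow> c4" where
  "Hvec x1 x2 x3 x4 z = scale4 (4 / Lam x1 x2 x3 x4 z) (Xzzb x1 x2 x3 x4 z)"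

definition marginally_trapped ::
  "complex set \<Rightarrow> (complex \<Rightarrow> real) \<Rightarrow> (complex \<Rightarrow> real) \<Rightarrow> (complex \<Rightarrow> real) \<Rightarrow> (complex \<Rightarrow> real) \<Rightarrow> bool" where
  "marginally_trapped S x1 x2 x3 x4 \<longleftrightarrow>
     (\<forall>z\<in>S. lor (Hvec x1 x2 x3 x4 z) (Hvec x1 x2 x3 x4 z) = 0)"

definition kappa :: "(complex \<Rightarrow> complex) \<Rightarrow> complex \<Rightarrow> real" where
  "kappa g z = (-1 + (cmod (g z))^2) / (1 + (cmod (g z))^2)"

definition Xz_rhs :: "(complex \<Rightarrow> complex) \<Rightarrow> (complex \<Rightarrow> real) \<Rightarrow> (complex \<Rightarrow> real) \<Rightarrow> complex \<Rightarrow> c4" where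
  "Xz_rhs g A B z =
    (let a = wz (cr A) z; b = wz (cr B) z; w = g z in
     (a * ((1/2) * (1/w - w)) + b * ((1/2) * (1/w + w)),
      a * ((\<i>/2) * (1/w + w)) + b * ((\<i>/2) * (1/w - w)),
      a,
      b))"

definition Gvec :: "(complex \<Rightarrow> complex) \<Rightarrow> complex \<Rightarrow> c4" where
  "Gvec g z = (of_real (2 * Re (g z)), of_real (2 * Im (g z)),
               of_real (-1 + (cmod (g z))^2), of_real (1 + (cmod (g z))^2))"

end

theory Submission
  imports Defs "HOL-Complex_Analysis.Riemann_Mapping"
begin

(* The components x3, x4 are A, B themselves, while x1, x2 must be real functions whose
   d/dz-derivatives are prescribed combinations f = A_z p + B_z q with p, q holomorphic in g.
   A C^1 function f is d/dz of a real function exactly when the real 1-form Re (2 f dz) is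
   closed, i.e. when d f / d zbar is real.  Here d f / d zbar = A_(z zbar) p + B_(z zbar) q
   = B_(z zbar) (kappa p + q) by the hypothesis on A_(z zbar), and kappa p + q is real for both
   choices of (p, q).  Closed forms are exact on convex domains (radial Poincare integral) and
   hence on simply connected ones, after pulling back along a Riemann map.  Since p, q are
   holomorphic, X_(z zbar) has the same shape as X_z with A_z, B_z replaced by A_(z zbar),
   B_(z zbar); every vector of that shape is null, so the mean curvature vector is null.  The
   remaining claims (conformality, the metric, <X_z, G> = 0) are algebraic identities in g. *)

section \<open>Partial derivatives in the plane\<close>

lemma has_vector_derivative_along_line:
  fixes f :: "complex \<Rightarrow> 'a::real_normed_vector"
  assumes "(f has_derivative D) (at (z + of_real t * e))"
  shows "((\<lambda>s::real. f (z + of_real s * e)) has_vector_derivative D e) (at t within X)"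
proof -
  have "((\<lambda>s::real. z + of_real s * e) has_derivative (\<lambda>s. of_real s * e)) (at t within X)"
    by (auto intro!: derivative_eq_intros)
  from has_derivative_in_compose[OF this has_derivative_subset[OF assms]]
  have "((\<lambda>s::real. f (z + of_real s * e)) has_derivative (\<lambda>s. D (of_real s * e))) (at t within X)"
    by (simp add: o_def)
  moreover have "D (of_real s * e) = s *\<^sub>R D e" for s
    using linear_scale[OF has_derivative_linear[OF assms], of s e] by (simp add: scaleR_conv_of_real)
  ultimately show ?thesis by (simp add: has_vector_derivative_def)
qed

lemma partials_of_derivative:
  fixes f :: "complex \<Rightarrow> 'a::real_normed_vector"
  assumes "(f has_derivative D) (at z)"
  shows "pu f z = D 1" "pv f z = D \<i>"
proof -
  have "((\<lambda>s::real. f (z + of_real s * 1)) has_vector_derivative D 1) (at 0)"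
       "((\<lambda>s::real. f (z + of_real s * \<i>)) has_vector_derivative D \<i>) (at 0)"
    by (rule has_vector_derivative_along_line, use assms in simp)+
  then show "pu f z = D 1" "pv f z = D \<i>"
    by (simp_all add: pu_def pv_def vector_derivative_at mult.commute)
qed

lemma partials_cong:
  fixes f g :: "complex \<Rightarrow> 'a::real_normed_vector"
  assumes "open S" "z \<in> S" "\<And>w. w \<in> S \<Longrightarrow> f w = g w"
  shows "pu f z = pu g z" "pv f z = pv g z"
proof -
  have ev: "eventually (\<lambda>t::real. z + of_real t * e \<in> S) (nhds 0)" for e
  proof -
    have "open ((\<lambda>t::real. z + of_real t * e) -` S)"
      by (rule open_vimage[OF assms(1)]) (intro continuous_intros)
    moreover have "0 \<in> (\<lambda>t::real. z + of_real t * e) -` S" using assms(2) by simp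
    ultimately show ?thesis unfolding eventually_nhds by blast
  qed
  show "pu f z = pu g z"
    unfolding pu_def
    by (rule vector_derivative_cong_eq) (use ev[of 1] assms(3) in \<open>auto elim: eventually_mono\<close>)
  show "pv f z = pv g z"
    unfolding pv_def
    by (rule vector_derivative_cong_eq)
      (use ev[of "\<i>"] assms(3) in \<open>auto elim: eventually_mono simp: mult.commute\<close>)
qed

lemma has_derivative_shifted_line:
  fixes f :: "complex \<Rightarrow> 'a::real_normed_vector"
  assumes "((\<lambda>t::real. f (w + of_real t * e)) has_vector_derivative v) (at 0)"
  shows "((\<lambda>s. f (w + of_real (s - s0) * e)) has_derivative (\<lambda>t. t *\<^sub>R v)) (at s0 within X)"
proof -
  have "((\<lambda>s::real. s - s0) has_derivative (\<lambda>t. t)) (at s0 within X)"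
    by (auto intro!: derivative_eq_intros)
  moreover have "((\<lambda>t::real. f (w + of_real t * e)) has_derivative (\<lambda>t. t *\<^sub>R v)) (at ((\<lambda>s. s - s0) s0))"
    using assms by (simp add: has_vector_derivative_def)
  ultimately show ?thesis
    using has_derivative_compose by (fastforce simp: o_def)
qed

lemma Complex_mem_ball:
  assumes "dist (Re z) x < r / 2" "dist (Im z) y < r / 2"
  shows "Complex x y \<in> ball z r"
proof -
  have "cmod (z - Complex x y) \<le> \<bar>Re z - x\<bar> + \<bar>Im z - y\<bar>"
    using cmod_le[of "z - Complex x y"] by simp
  also have "\<dots> < r" using assms by (simp add: dist_real_def)
  finally show ?thesis by (simp add: dist_norm)
qed

lemma has_derivative_Complex_coordinates:
  fixes f :: "complex \<Rightarrow> 'a::real_normed_vector"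
  assumes S: "open S" and C1: "C1_on S f" and z: "z \<in> S"
  shows "((\<lambda>(x, y). f (Complex x y)) has_derivative (\<lambda>(tx, ty). tx *\<^sub>R pu f z + ty *\<^sub>R pv f z))
    (at (Re z, Im z))"
proof -
  have lu: "((\<lambda>t::real. f (w + of_real t * 1)) has_vector_derivative pu f w) (at 0)"
   and lv: "((\<lambda>t::real. f (w + of_real t * \<i>)) has_vector_derivative pv f w) (at 0)" if "w \<in> S" for w
    using C1 that by (auto simp: C1_on_def pu_def pv_def vector_derivative_works mult.commute)
  obtain r where r: "r > 0" "ball z r \<subseteq> S" using S z openE by blast
  define X where "X = ball (Re z) (r/2)"
  define Y where "Y = ball (Im z) (r/2)"
  have XY: "open (X \<times> Y)" "(Re z, Im z) \<in> X \<times> Y" "Im z \<in> Y" "convex Y"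
    using r by (auto simp: X_def Y_def open_Times)
  have inS: "Complex x y \<in> S" if "x \<in> X" "y \<in> Y" for x y
    using Complex_mem_ball[of z x r y] that r(2) by (auto simp: X_def Y_def)
  have "z + of_real (x - Re z) * 1 = Complex x (Im z)" for x by (simp add: complex_eq_iff)
  then have fx: "((\<lambda>x. f (Complex x (Im z))) has_derivative (\<lambda>t. t *\<^sub>R pu f z)) (at (Re z) within X)"
    using has_derivative_shifted_line[OF lu[OF z], of "Re z" X] by simp
  have fy: "((\<lambda>y. f (Complex x y)) has_derivative blinfun_apply (blinfun_scaleR_left (pv f (Complex x y))))
      (at y within Y)" if "x \<in> X" "y \<in> Y" for x y
  proof -
    have "Complex x y + of_real (s - y) * \<i> = Complex x s" for s by (simp add: complex_eq_iff)
    then show ?thesis using has_derivative_shifted_line[OF lv[OF inS[OF that]], of y Y] by simp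
  qed
  have "continuous_on (X \<times> Y) (\<lambda>p. Complex (fst p) (snd p))"
    by (simp add: Complex_eq continuous_intros)
  moreover have "continuous_on S (pv f)" using C1 by (simp add: C1_on_def)
  moreover have "(\<lambda>p. Complex (fst p) (snd p)) ` (X \<times> Y) \<subseteq> S" using inS by auto
  ultimately have "continuous_on (X \<times> Y) (\<lambda>p. pv f (Complex (fst p) (snd p)))"
    using continuous_on_compose2 by blast
  then have "continuous_on (X \<times> Y) (\<lambda>p. blinfun_scaleR_left (pv f (Complex (fst p) (snd p))))"
    by (intro continuous_intros)
  then have "continuous (at (Re z, Im z) within X \<times> Y)
      (\<lambda>p. blinfun_scaleR_left (pv f (Complex (fst p) (snd p))))"
    using XY(2) continuous_on_eq_continuous_within by blast
  then have "continuous (at (Re z, Im z) within X \<times> Y) (\<lambda>(x, y). blinfun_scaleR_left (pv f (Complex x y)))"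
    by (simp add: case_prod_unfold)
  from has_derivative_partialsI[OF fx fy this XY(3,4)]
  have "((\<lambda>(x, y). f (Complex x y)) has_derivative
      (\<lambda>(tx, ty). tx *\<^sub>R pu f z + blinfun_scaleR_left (pv f (Complex (Re z) (Im z))) ty))
      (at (Re z, Im z))"
    using XY(1,2) at_within_open by metis
  then show ?thesis by simp
qed

lemma C1_on_imp_has_derivative:
  fixes f :: "complex \<Rightarrow> 'a::real_normed_vector"
  assumes "open S" "C1_on S f" "z \<in> S"
  shows "(f has_derivative (\<lambda>h. Re h *\<^sub>R pu f z + Im h *\<^sub>R pv f z)) (at z)"
proof -
  have "((\<lambda>w. (Re w, Im w)) has_derivative (\<lambda>h. (Re h, Im h))) (at z)"
    by (auto intro!: derivative_eq_intros)
  from has_derivative_compose[OF this has_derivative_Complex_coordinates[OF assms]]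
  have "((\<lambda>w. f (Complex (Re w) (Im w))) has_derivative
      (\<lambda>h. Re h *\<^sub>R pu f z + Im h *\<^sub>R pv f z)) (at z)"
    by (simp only: case_prod_conv)
  then show ?thesis by (simp only: complex.collapse)
qed

lemma C1_on_imp_continuous_on:
  fixes f :: "complex \<Rightarrow> 'a::real_normed_vector"
  assumes "open S" "C1_on S f"
  shows "continuous_on S f"
  using C1_on_imp_has_derivative[OF assms] has_derivative_continuous
  by (blast intro: continuous_at_imp_continuous_on)

lemma continuous_on_compose_C1:
  fixes F :: "complex \<Rightarrow> 'a::real_normed_vector"
  assumes "open D" "C1_on D F" "continuous_on K \<phi>" "\<phi> ` K \<subseteq> D"
  shows "continuous_on K (\<lambda>x. F (\<phi> x))" "continuous_on K (\<lambda>x. pu F (\<phi> x))"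
    "continuous_on K (\<lambda>x. pv F (\<phi> x))"
  using continuous_on_compose2[OF C1_on_imp_continuous_on[OF assms(1,2)] assms(3,4)]
    continuous_on_compose2[OF _ assms(3,4), of "pu F"] continuous_on_compose2[OF _ assms(3,4), of "pv F"]
    assms(2) by (auto simp: C1_on_def)

lemma has_derivative_imp_C1_on:
  fixes f :: "complex \<Rightarrow> 'a::real_normed_vector"
  assumes "open S" "\<And>z. z \<in> S \<Longrightarrow> (f has_derivative D z) (at z)"
    and "continuous_on S (\<lambda>z. D z 1)" "continuous_on S (\<lambda>z. D z \<i>)"
  shows "C1_on S f"
proof -
  have "(\<lambda>t::real. f (z + of_real t * e)) differentiable (at 0)" if "z \<in> S" for z e
    using has_vector_derivative_along_line[of f "D z" z 0 e] assms(2)[OF that]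
    by (auto simp: differentiable_def has_vector_derivative_def)
  from this[of _ 1] this[of _ "\<i>"]
  have "(\<lambda>t::real. f (z + of_real t)) differentiable (at 0)"
    "(\<lambda>t::real. f (z + \<i> * of_real t)) differentiable (at 0)" if "z \<in> S" for z
    using that by (simp_all add: mult.commute)
  moreover have "continuous_on S (pu f)"
    by (rule continuous_on_eq[OF assms(3)]) (simp add: partials_of_derivative[OF assms(2)])
  moreover have "continuous_on S (pv f)"
    by (rule continuous_on_eq[OF assms(4)]) (simp add: partials_of_derivative[OF assms(2)])
  ultimately show ?thesis
    unfolding C1_on_def by blast
qed

lemma C1_on_cong:
  fixes f g :: "complex \<Rightarrow> 'a::real_normed_vector"
  assumes "open S" "\<And>w. w \<in> S \<Longrightarrow> f w = g w" "C1_on S f"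
  shows "C1_on S g"
proof (rule has_derivative_imp_C1_on[OF assms(1)])
  show "(g has_derivative (\<lambda>h. Re h *\<^sub>R pu f z + Im h *\<^sub>R pv f z)) (at z)" if "z \<in> S" for z
    using has_derivative_transform_within_open[OF C1_on_imp_has_derivative[OF assms(1,3) that]
        assms(1) that assms(2)] .
qed (use assms(3) in \<open>auto simp: C1_on_def\<close>)

lemma C1_on_bounded_linear:
  fixes f :: "complex \<Rightarrow> 'a::real_normed_vector" and L :: "'a \<Rightarrow> 'b::real_normed_vector"
  assumes L: "bounded_linear L" and S: "open S" and f: "C1_on S f"
  shows "C1_on S (\<lambda>z. L (f z))"
    and "z \<in> S \<Longrightarrow> pu (\<lambda>z. L (f z)) z = L (pu f z)"
    and "z \<in> S \<Longrightarrow> pv (\<lambda>z. L (f z)) z = L (pv f z)"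
proof -
  have d: "((\<lambda>z. L (f z)) has_derivative (\<lambda>h. L (Re h *\<^sub>R pu f z + Im h *\<^sub>R pv f z))) (at z)"
    if "z \<in> S" for z
    using bounded_linear.has_derivative[OF L C1_on_imp_has_derivative[OF S f that]] .
  have "continuous_on S (\<lambda>z. L (pu f z))" "continuous_on S (\<lambda>z. L (pv f z))"
    using f L by (auto simp: C1_on_def intro: bounded_linear.continuous_on)
  then show "C1_on S (\<lambda>z. L (f z))"
    by (intro has_derivative_imp_C1_on[OF S d]) auto
  show "z \<in> S \<Longrightarrow> pu (\<lambda>z. L (f z)) z = L (pu f z)" "z \<in> S \<Longrightarrow> pv (\<lambda>z. L (f z)) z = L (pv f z)"
    using partials_of_derivative[OF d] by auto
qed

section \<open>Symmetry of second partial derivatives\<close>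

lemma mvt_along_line:
  fixes g :: "complex \<Rightarrow> real"
  assumes h: "h > 0"
    and dg: "\<And>s. s \<in> {0..h} \<Longrightarrow> (g has_derivative Dg (w + of_real s * d)) (at (w + of_real s * d))"
  shows "\<exists>s\<in>{0<..<h}. g (w + of_real h * d) - g w = h * Dg (w + of_real s * d) d"
proof -
  have "((\<lambda>s. g (w + of_real s * d)) has_derivative (\<lambda>\<sigma>. \<sigma> *\<^sub>R Dg (w + of_real s * d) d))
      (at s within {0..h})" if "0 \<le> s" "s \<le> h" for s
    using has_vector_derivative_along_line[OF dg] that by (simp add: has_vector_derivative_def)
  from mvt_simple[OF h this] show ?thesis by auto
qed

lemma second_difference_mvt:
  fixes f P :: "complex \<Rightarrow> real"
  assumes h: "h > 0"
    and sq: "\<And>s t. s \<in> {0..h} \<Longrightarrow> t \<in> {0..h} \<Longrightarrow> z + of_real s * d + of_real t * e \<in> S"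
    and df: "\<And>w. w \<in> S \<Longrightarrow> (f has_derivative Df w) (at w)"
    and dfP: "\<And>w. w \<in> S \<Longrightarrow> Df w d = P w"
    and dP: "\<And>w. w \<in> S \<Longrightarrow> (P has_derivative DP w) (at w)"
  shows "\<exists>s\<in>{0..h}. \<exists>t\<in>{0..h}. f (z + of_real h * d + of_real h * e) - f (z + of_real h * d)
           - f (z + of_real h * e) + f z = h * h * DP (z + of_real s * d + of_real t * e) e"
proof -
  have sq0: "z + of_real s * d \<in> S" if "s \<in> {0..h}" for s
    using sq[OF that, of 0] h by simp
  have shift: "((\<lambda>p. f (p + of_real h * e)) has_derivative Df (p + of_real h * e)) (at p)"
    if "p + of_real h * e \<in> S" for p
    using has_derivative_compose[of "\<lambda>p. p + of_real h * e" "\<lambda>k. k" p UNIV f, OF _ df[OF that]]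
    by (simp add: has_derivative_add_const has_derivative_ident)
  obtain \<xi> where \<xi>: "\<xi> \<in> {0<..<h}" and
    e1: "(f (z + of_real h * d + of_real h * e) - f (z + of_real h * d)) - (f (z + of_real h * e) - f z)
       = h * (Df (z + of_real \<xi> * d + of_real h * e) d - Df (z + of_real \<xi> * d) d)"
    using mvt_along_line[OF h, of "\<lambda>p. f (p + of_real h * e) - f p"
        "\<lambda>p k. Df (p + of_real h * e) k - Df p k" z d]
      has_derivative_diff[OF shift df] sq sq0 h by fastforce
  then have \<xi>h: "\<xi> \<in> {0..h}" by simp
  obtain \<eta> where \<eta>: "\<eta> \<in> {0<..<h}" and
    e2: "P (z + of_real \<xi> * d + of_real h * e) - P (z + of_real \<xi> * d)
       = h * DP (z + of_real \<xi> * d + of_real \<eta> * e) e"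
    using mvt_along_line[OF h, of P DP "z + of_real \<xi> * d" e] dP sq[OF \<xi>h] by fastforce
  have "Df (z + of_real \<xi> * d + of_real h * e) d - Df (z + of_real \<xi> * d) d
      = P (z + of_real \<xi> * d + of_real h * e) - P (z + of_real \<xi> * d)"
    using dfP sq[OF \<xi>h] sq0[OF \<xi>h] h by simp
  with e1 e2 \<xi>h \<eta> show ?thesis by (intro bexI[of _ \<xi>] bexI[of _ \<eta>]) auto
qed

lemma mixed_partials_meet:
  fixes f :: "complex \<Rightarrow> real"
  assumes S: "open S" and C2: "C2_on S f" and h: "h > 0"
    and sq: "\<And>s t. s \<in> {0..h} \<Longrightarrow> t \<in> {0..h} \<Longrightarrow> z + of_real s + \<i> * of_real t \<in> S"
  shows "\<exists>s\<in>{0..h}. \<exists>t\<in>{0..h}. \<exists>s'\<in>{0..h}. \<exists>t'\<in>{0..h}.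
    pv (pu f) (z + of_real s + \<i> * of_real t) = pu (pv f) (z + of_real s' + \<i> * of_real t')"
proof -
  have C: "C1_on S f" "C1_on S (pu f)" "C1_on S (pv f)" using C2 by (auto simp: C2_on_def)
  have df: "(f has_derivative (\<lambda>k. Re k *\<^sub>R pu f w + Im k *\<^sub>R pv f w)) (at w)"
    and dpu: "(pu f has_derivative (\<lambda>k. Re k *\<^sub>R pu (pu f) w + Im k *\<^sub>R pv (pu f) w)) (at w)"
    and dpv: "(pv f has_derivative (\<lambda>k. Re k *\<^sub>R pu (pv f) w + Im k *\<^sub>R pv (pv f) w)) (at w)"
    if "w \<in> S" for w
    using C1_on_imp_has_derivative[OF S C(1) that] C1_on_imp_has_derivative[OF S C(2) that]
      C1_on_imp_has_derivative[OF S C(3) that] by auto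
  have sq1: "z + of_real s * 1 + of_real t * \<i> \<in> S"
    and sq2: "z + of_real s * \<i> + of_real t * 1 \<in> S" if "s \<in> {0..h}" "t \<in> {0..h}" for s t
    using sq[OF that] sq[OF that(2,1)] by (simp_all add: algebra_simps)
  have du: "Re 1 *\<^sub>R pu f w + Im 1 *\<^sub>R pv f w = pu f w"
    and dv: "Re \<i> *\<^sub>R pu f w + Im \<i> *\<^sub>R pv f w = pv f w" if "w \<in> S" for w
    by simp_all
  obtain s t where st: "s \<in> {0..h}" "t \<in> {0..h}" and
    uv: "f (z + of_real h * 1 + of_real h * \<i>) - f (z + of_real h * 1) - f (z + of_real h * \<i>) + f z
       = h * h * (Re \<i> *\<^sub>R pu (pu f) (z + of_real s * 1 + of_real t * \<i>)
                  + Im \<i> *\<^sub>R pv (pu f) (z + of_real s * 1 + of_real t * \<i>))"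
    using second_difference_mvt[OF h sq1 df du dpu] by blast
  obtain s' t' where st': "s' \<in> {0..h}" "t' \<in> {0..h}" and
    vu: "f (z + of_real h * \<i> + of_real h * 1) - f (z + of_real h * \<i>) - f (z + of_real h * 1) + f z
       = h * h * (Re 1 *\<^sub>R pu (pv f) (z + of_real s' * \<i> + of_real t' * 1)
                  + Im 1 *\<^sub>R pv (pv f) (z + of_real s' * \<i> + of_real t' * 1))"
    using second_difference_mvt[OF h sq2 df dv dpv] by blast
  have "f (z + of_real h * \<i> + of_real h * 1) = f (z + of_real h * 1 + of_real h * \<i>)"
    by (simp add: add_ac)
  moreover have "f (z + of_real h * 1 + of_real h * \<i>) - f (z + of_real h * 1) - f (z + of_real h * \<i>) + f z
       = h * h * pv (pu f) (z + of_real s * 1 + of_real t * \<i>)"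
    using uv by simp
  moreover have "f (z + of_real h * \<i> + of_real h * 1) - f (z + of_real h * \<i>) - f (z + of_real h * 1) + f z
       = h * h * pu (pv f) (z + of_real s' * \<i> + of_real t' * 1)"
    using vu by simp
  ultimately have "h * h * pv (pu f) (z + of_real s * 1 + of_real t * \<i>)
      = h * h * pu (pv f) (z + of_real s' * \<i> + of_real t' * 1)"
    by linarith
  with h have "pv (pu f) (z + of_real s + \<i> * of_real t) = pu (pv f) (z + of_real t' + \<i> * of_real s')"
    by (simp add: algebra_simps)
  with st st' show ?thesis by blast
qed

lemma continuous_on_ball_close:
  fixes \<phi> :: "complex \<Rightarrow> real"
  assumes "open S" "z \<in> S" "continuous_on S \<phi>" "\<epsilon> > 0"
  obtains r where "r > 0" "ball z r \<subseteq> S" "\<And>w. w \<in> ball z r \<Longrightarrow> \<bar>\<phi> w - \<phi> z\<bar> < \<epsilon>"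
proof -
  obtain r1 where r1: "r1 > 0" "ball z r1 \<subseteq> S" using assms(1,2) openE by blast
  obtain r2 where r2: "r2 > 0" "\<And>w. w \<in> S \<Longrightarrow> dist w z < r2 \<Longrightarrow> dist (\<phi> w) (\<phi> z) < \<epsilon>"
    using assms(2-4) unfolding continuous_on_iff by blast
  show thesis
  proof (rule that[of "min r1 r2"])
    show "\<bar>\<phi> w - \<phi> z\<bar> < \<epsilon>" if "w \<in> ball z (min r1 r2)" for w
    proof -
      have "w \<in> S" "dist w z < r2" using that r1(2) by (auto simp: dist_commute)
      then show ?thesis using r2(2) by (simp add: dist_real_def)
    qed
    show "ball z (min r1 r2) \<subseteq> S" using r1(2) subset_ball[of "min r1 r2" r1 z] by simp
  qed (use r1 r2 in simp)
qed

lemma pu_pv_commute: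
  fixes f :: "complex \<Rightarrow> real"
  assumes S: "open S" and C2: "C2_on S f" and z: "z \<in> S"
  shows "pu (pv f) z = pv (pu f) z"
proof (rule ccontr)
  assume ne: "pu (pv f) z \<noteq> pv (pu f) z"
  define \<epsilon> where "\<epsilon> = \<bar>pu (pv f) z - pv (pu f) z\<bar> / 2"
  have \<epsilon>: "\<epsilon> > 0" using ne by (simp add: \<epsilon>_def)
  have cont: "continuous_on S (pv (pu f))" "continuous_on S (pu (pv f))"
    using C2 by (simp_all add: C2_on_def C1_on_def)
  obtain r1 where r1: "r1 > 0" "ball z r1 \<subseteq> S"
    and close1: "\<And>w. w \<in> ball z r1 \<Longrightarrow> \<bar>pv (pu f) w - pv (pu f) z\<bar> < \<epsilon>"
    using continuous_on_ball_close[OF S z cont(1) \<epsilon>] by blast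
  obtain r2 where r2: "r2 > 0"
    and close2: "\<And>w. w \<in> ball z r2 \<Longrightarrow> \<bar>pu (pv f) w - pu (pv f) z\<bar> < \<epsilon>"
    using continuous_on_ball_close[OF S z cont(2) \<epsilon>] by blast
  define r where "r = min r1 r2"
  have r: "r > 0" "ball z r \<subseteq> S" using r1 r2 by (auto simp: r_def)
  have close: "\<bar>pv (pu f) w - pv (pu f) z\<bar> < \<epsilon> \<and> \<bar>pu (pv f) w - pu (pv f) z\<bar> < \<epsilon>"
    if "w \<in> ball z r" for w
    using close1 close2 that by (simp add: r_def)
  define h where "h = r / 4"
  have h: "h > 0" using r by (simp add: h_def)
  have sq: "z + of_real s + \<i> * of_real t \<in> ball z r" if "s \<in> {0..h}" "t \<in> {0..h}" for s t
  proof -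
    have "cmod (of_real s + \<i> * of_real t) \<le> \<bar>s\<bar> + \<bar>t\<bar>"
      using norm_triangle_ineq[of "of_real s" "\<i> * of_real t"] by (simp add: norm_mult)
    also have "\<dots> < r" using that r by (simp add: h_def)
    finally have "dist (z + (of_real s + \<i> * of_real t)) z < r" by (simp add: dist_norm)
    then show ?thesis by (simp add: dist_commute add.assoc)
  qed
  obtain s t s' t' where st: "s \<in> {0..h}" "t \<in> {0..h}" and st': "s' \<in> {0..h}" "t' \<in> {0..h}"
    and "pv (pu f) (z + of_real s + \<i> * of_real t) = pu (pv f) (z + of_real s' + \<i> * of_real t')"
    using mixed_partials_meet[OF S C2 h] sq r(2) by blast
  moreover have "\<bar>pv (pu f) (z + of_real s + \<i> * of_real t) - pv (pu f) z\<bar> < \<epsilon>"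
    "\<bar>pu (pv f) (z + of_real s' + \<i> * of_real t') - pu (pv f) z\<bar> < \<epsilon>"
    using close[OF sq[OF st]] close[OF sq[OF st']] by simp_all
  moreover have "\<bar>x - a\<bar> < \<bar>b - a\<bar> / 2 \<Longrightarrow> \<bar>x - b\<bar> < \<bar>b - a\<bar> / 2 \<Longrightarrow> False" for x a b :: real
    by (simp add: abs_if split: if_splits)
  ultimately show False unfolding \<epsilon>_def by metis
qed

section \<open>Wirtinger calculus\<close>

lemma wirtinger_real:
  fixes y :: "complex \<Rightarrow> real"
  assumes "open S" "C1_on S y" "z \<in> S"
  shows "wz (cr y) z = (of_real (pu y z) - \<i> * of_real (pv y z)) / 2"
    and "wzb (cr y) z = (of_real (pu y z) + \<i> * of_real (pv y z)) / 2"
proof -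
  have "bounded_linear complex_of_real" by (rule bounded_linear_of_real)
  from C1_on_bounded_linear(2,3)[OF this assms]
  show "wz (cr y) z = (of_real (pu y z) - \<i> * of_real (pv y z)) / 2"
    "wzb (cr y) z = (of_real (pu y z) + \<i> * of_real (pv y z)) / 2"
    by (simp_all add: wz_def wzb_def cr_def)
qed

lemma C1_on_mult_holomorphic:
  fixes f p :: "complex \<Rightarrow> complex"
  assumes S: "open S" and f: "C1_on S f" and p: "p holomorphic_on S"
  shows "C1_on S (\<lambda>z. f z * p z)"
    and "z \<in> S \<Longrightarrow> wzb (\<lambda>z. f z * p z) z = wzb f z * p z"
proof -
  define D where "D z h = f z * (deriv p z * h) + (Re h *\<^sub>R pu f z + Im h *\<^sub>R pv f z) * p z" for z h
  have d: "((\<lambda>z. f z * p z) has_derivative D z) (at z)" if "z \<in> S" for z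
    unfolding D_def
    using has_derivative_mult[OF C1_on_imp_has_derivative[OF S f that]
        holomorphic_derivI[OF p S that, unfolded has_field_derivative_def]] .
  have "continuous_on S f" "continuous_on S (pu f)" "continuous_on S (pv f)"
    "continuous_on S p" "continuous_on S (deriv p)"
    using C1_on_imp_continuous_on[OF S f] f holomorphic_on_imp_continuous_on[OF p]
      holomorphic_on_imp_continuous_on[OF holomorphic_deriv[OF p S]]
    by (auto simp: C1_on_def)
  then show "C1_on S (\<lambda>z. f z * p z)"
    by (intro has_derivative_imp_C1_on[OF S d]) (auto simp: D_def intro!: continuous_intros)
  show "wzb (\<lambda>z. f z * p z) z = wzb f z * p z" if "z \<in> S"
    using partials_of_derivative[OF d[OF that]]
    by (simp add: wzb_def D_def field_simps)
qed

lemma C1_on_add: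
  fixes f g :: "complex \<Rightarrow> complex"
  assumes S: "open S" and f: "C1_on S f" and g: "C1_on S g"
  shows "C1_on S (\<lambda>z. f z + g z)"
    and "z \<in> S \<Longrightarrow> wzb (\<lambda>z. f z + g z) z = wzb f z + wzb g z"
proof -
  define D where "D z h = (Re h *\<^sub>R pu f z + Im h *\<^sub>R pv f z) + (Re h *\<^sub>R pu g z + Im h *\<^sub>R pv g z)"
    for z h
  have d: "((\<lambda>z. f z + g z) has_derivative D z) (at z)" if "z \<in> S" for z
    unfolding D_def
    using has_derivative_add[OF C1_on_imp_has_derivative[OF S f that] C1_on_imp_has_derivative[OF S g that]] .
  have "continuous_on S (pu f)" "continuous_on S (pv f)" "continuous_on S (pu g)" "continuous_on S (pv g)"
    using f g by (auto simp: C1_on_def)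
  then show "C1_on S (\<lambda>z. f z + g z)"
    by (intro has_derivative_imp_C1_on[OF S d]) (auto simp: D_def intro!: continuous_intros)
  show "wzb (\<lambda>z. f z + g z) z = wzb f z + wzb g z" if "z \<in> S"
    using partials_of_derivative[OF d[OF that]]
    by (simp add: wzb_def D_def field_simps)
qed

lemma C1_on_real_combination:
  fixes P Q :: "complex \<Rightarrow> real" and c :: complex
  assumes S: "open S" and P: "C1_on S P" and Q: "C1_on S Q"
  shows "C1_on S (\<lambda>w. (of_real (P w) + c * of_real (Q w)) / 2)"
    and "z \<in> S \<Longrightarrow> pu (\<lambda>w. (of_real (P w) + c * of_real (Q w)) / 2) z
      = (of_real (pu P z) + c * of_real (pu Q z)) / 2"
    and "z \<in> S \<Longrightarrow> pv (\<lambda>w. (of_real (P w) + c * of_real (Q w)) / 2) z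
      = (of_real (pv P z) + c * of_real (pv Q z)) / 2"
proof -
  define D where "D z h = (of_real (Re h *\<^sub>R pu P z + Im h *\<^sub>R pv P z)
      + c * of_real (Re h *\<^sub>R pu Q z + Im h *\<^sub>R pv Q z)) / (2::complex)" for z h
  have d: "((\<lambda>w. (of_real (P w) + c * of_real (Q w)) / 2) has_derivative D z) (at z)" if "z \<in> S" for z
    unfolding D_def
    by (intro bounded_linear.has_derivative[OF bounded_linear_divide] has_derivative_add
        has_derivative_mult_right has_derivative_of_real C1_on_imp_has_derivative[OF S _ that] P Q)
  have "continuous_on S (pu P)" "continuous_on S (pv P)" "continuous_on S (pu Q)" "continuous_on S (pv Q)"
    using P Q by (auto simp: C1_on_def)
  then show "C1_on S (\<lambda>w. (of_real (P w) + c * of_real (Q w)) / 2)"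
    by (intro has_derivative_imp_C1_on[OF S d]) (auto simp: D_def intro!: continuous_intros)
  show "z \<in> S \<Longrightarrow> pu (\<lambda>w. (of_real (P w) + c * of_real (Q w)) / 2) z
      = (of_real (pu P z) + c * of_real (pu Q z)) / 2"
    "z \<in> S \<Longrightarrow> pv (\<lambda>w. (of_real (P w) + c * of_real (Q w)) / 2) z
      = (of_real (pv P z) + c * of_real (pv Q z)) / 2"
    using partials_of_derivative[OF d] by (simp_all add: D_def)
qed

lemma C1_on_wz_real:
  fixes A :: "complex \<Rightarrow> real"
  assumes S: "open S" and A: "C2_on S A"
  shows "C1_on S (wz (cr A))"
proof (rule C1_on_cong[OF S _ C1_on_real_combination(1)[OF S, of "pu A" "pv A" "- \<i>"]])
  show "(of_real (pu A w) + - \<i> * of_real (pv A w)) / 2 = wz (cr A) w" if "w \<in> S" for w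
    using wirtinger_real(1)[OF S _ that] A by (simp add: C2_on_def)
qed (use A in \<open>simp_all add: C2_on_def\<close>)

lemma wirtinger_laplacian:
  fixes A :: "complex \<Rightarrow> real"
  assumes S: "open S" and A: "C2_on S A" and z: "z \<in> S"
  shows "wz (wzb (cr A)) z = of_real (pu (pu A) z + pv (pv A) z) / 4"
    and "wzb (wz (cr A)) z = of_real (pu (pu A) z + pv (pv A) z) / 4"
proof -
  have C: "C1_on S A" "C1_on S (pu A)" "C1_on S (pv A)" using A by (auto simp: C2_on_def)
  have comm: "pu (pv A) z = pv (pu A) z" by (rule pu_pv_commute[OF S A z])
  have zb: "pu (wzb (cr A)) z = (of_real (pu (pu A) z) + \<i> * of_real (pu (pv A) z)) / 2"
    "pv (wzb (cr A)) z = (of_real (pv (pu A) z) + \<i> * of_real (pv (pv A) z)) / 2"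
    using partials_cong[OF S z wirtinger_real(2)[OF S C(1)]]
      C1_on_real_combination(2,3)[OF S C(2,3) z, of \<i>] by simp_all
  show "wz (wzb (cr A)) z = of_real (pu (pu A) z + pv (pv A) z) / 4"
    unfolding wz_def zb comm by (simp add: field_simps)
  have zz: "pu (wz (cr A)) z = (of_real (pu (pu A) z) + - \<i> * of_real (pu (pv A) z)) / 2"
    "pv (wz (cr A)) z = (of_real (pv (pu A) z) + - \<i> * of_real (pv (pv A) z)) / 2"
    using partials_cong[OF S z wirtinger_real(1)[OF S C(1)]]
      C1_on_real_combination(2,3)[OF S C(2,3) z, of "- \<i>"] by simp_all
  show "wzb (wz (cr A)) z = of_real (pu (pu A) z + pv (pv A) z) / 4"
    unfolding wzb_def zz comm by (simp add: field_simps)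
qed

section \<open>Exactness of closed real forms \<open>Re (F dz)\<close>\<close>

definition radial_potential :: "complex \<Rightarrow> (complex \<Rightarrow> complex) \<Rightarrow> complex \<Rightarrow> real" where
  "radial_potential c F w = integral {0..1} (\<lambda>t. Re (F (c + of_real t * (w - c)) * (w - c)))"

lemma line_neighbourhood:
  fixes w e :: complex
  assumes "open D" "w \<in> D"
  obtains V where "open V" "convex V" "0 \<in> V" "\<And>s. s \<in> V \<Longrightarrow> w + of_real s * e \<in> D"
proof -
  obtain r where r: "r > 0" "ball w r \<subseteq> D" using assms openE by blast
  define \<delta> where "\<delta> = r / (cmod e + 1)"
  have e1: "cmod e + 1 > 0" by (simp add: add_nonneg_pos)
  show thesis
  proof (rule that[of "ball 0 \<delta>"])
    show "0 \<in> ball (0::real) \<delta>" using r e1 by (simp add: \<delta>_def)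
    show "w + of_real s * e \<in> D" if "s \<in> ball 0 \<delta>" for s
    proof -
      have "cmod (of_real s * e) \<le> \<bar>s\<bar> * (cmod e + 1)" by (simp add: norm_mult mult_left_mono)
      also have "\<dots> < \<delta> * (cmod e + 1)"
        using that e1 by (intro mult_strict_right_mono) auto
      also have "\<dots> = r" using e1 by (simp add: \<delta>_def)
      finally show ?thesis using r(2) by (auto simp: dist_norm)
    qed
  qed auto
qed

lemma radial_integrand_derivative:
  fixes F :: "complex \<Rightarrow> complex"
  assumes D: "open D" and F: "C1_on D F" and p: "c + of_real t * (w + of_real s * e - c) \<in> D"
  shows "((\<lambda>s. Re (F (c + of_real t * (w + of_real s * e - c)) * (w + of_real s * e - c)))
    has_vector_derivative Re (F (c + of_real t * (w + of_real s * e - c)) * e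
      + of_real t * (Re e *\<^sub>R pu F (c + of_real t * (w + of_real s * e - c))
                    + Im e *\<^sub>R pv F (c + of_real t * (w + of_real s * e - c))) * (w + of_real s * e - c)))
    (at s within V)"
proof -
  have peq: "c + of_real t * (w + of_real s' * e - c) = (c + of_real t * (w - c)) + of_real s' * (of_real t * e)"
    for s' by (simp add: algebra_simps)
  have "(F has_derivative (\<lambda>h. Re h *\<^sub>R pu F (c + of_real t * (w + of_real s * e - c))
      + Im h *\<^sub>R pv F (c + of_real t * (w + of_real s * e - c))))
      (at ((c + of_real t * (w - c)) + of_real s * (of_real t * e)))"
    using C1_on_imp_has_derivative[OF D F p] by (simp only: peq)
  from has_vector_derivative_along_line[OF this]
  have dF: "((\<lambda>s. F (c + of_real t * (w + of_real s * e - c))) has_vector_derivative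
      of_real t * (Re e *\<^sub>R pu F (c + of_real t * (w + of_real s * e - c))
                   + Im e *\<^sub>R pv F (c + of_real t * (w + of_real s * e - c)))) (at s within V)"
    by (simp add: peq scaleR_conv_of_real algebra_simps)
  have "((\<lambda>s::real. w + of_real s * e - c) has_vector_derivative e) (at s within V)"
    unfolding has_vector_derivative_def
    by (auto intro!: derivative_eq_intros simp: scaleR_conv_of_real)
  from bounded_linear.has_vector_derivative[OF bounded_linear_Re has_vector_derivative_mult[OF dF this]]
  show ?thesis by (simp add: algebra_simps)
qed

lemma radial_potential_line_derivative:
  fixes F :: "complex \<Rightarrow> complex"
  assumes D: "open D" "convex D" and F: "C1_on D F" and c: "c \<in> D" and w: "w \<in> D"
  defines "q \<equiv> \<lambda>t. c + of_real t * (w - c)"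
  shows "((\<lambda>s. radial_potential c F (w + of_real s * e)) has_vector_derivative
     integral {0..1} (\<lambda>t. Re (F (q t) * e
        + of_real t * (Re e *\<^sub>R pu F (q t) + Im e *\<^sub>R pv F (q t)) * (w - c)))) (at 0)"
proof -
  obtain V where V: "open V" "convex V" "0 \<in> V" and wsD: "\<And>s. s \<in> V \<Longrightarrow> w + of_real s * e \<in> D"
    using line_neighbourhood[OF D(1) w] by blast
  define p where "p s t = c + of_real t * (w + of_real s * e - c)" for s t :: real
  have pD: "p s t \<in> D" if "s \<in> V" "t \<in> {0..1}" for s t
  proof -
    have "(1 - t) *\<^sub>R c + t *\<^sub>R (w + of_real s * e) \<in> D"
      using convexD[OF D(2) c wsD[OF that(1)], of "1 - t" t] that(2) by auto
    then show ?thesis by (simp add: p_def scaleR_conv_of_real algebra_simps)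
  qed
  define f where "f s t = Re (F (p s t) * (w + of_real s * e - c))" for s t
  define fx where "fx s t = Re (F (p s t) * e
      + of_real t * (Re e *\<^sub>R pu F (p s t) + Im e *\<^sub>R pv F (p s t)) * (w + of_real s * e - c))" for s t
  have fxd: "((\<lambda>s. f s t) has_vector_derivative fx s t) (at s within V)"
    if "s \<in> V" "t \<in> cbox 0 1" for s t
  proof -
    have "c + of_real t * (w + of_real s * e - c) \<in> D" using pD[of s t] that by (simp add: p_def)
    from radial_integrand_derivative[OF D(1) F this, of V] show ?thesis by (simp add: f_def fx_def p_def)
  qed
  have "continuous_on (V \<times> {0..1}) (\<lambda>x. p (fst x) (snd x))"
    by (simp add: p_def continuous_intros)
  moreover have "(\<lambda>x. p (fst x) (snd x)) ` (V \<times> {0..1}) \<subseteq> D" using pD by auto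
  ultimately have "continuous_on (V \<times> {0..1}) (\<lambda>x. fx (fst x) (snd x))"
    unfolding fx_def by (intro continuous_intros continuous_on_compose_C1[OF D(1) F])
  then have cfx: "continuous_on (V \<times> cbox 0 1) (\<lambda>(s, t). fx s t)"
    by (simp add: case_prod_unfold)
  have intf: "f s integrable_on cbox 0 1" if "s \<in> V" for s
  proof -
    have "continuous_on {0..1} (\<lambda>t. p s t)" by (simp add: p_def continuous_intros)
    moreover have "(\<lambda>t. p s t) ` {0..1} \<subseteq> D" using pD that by auto
    ultimately have "continuous_on {0..1} (f s)"
      unfolding f_def by (intro continuous_intros continuous_on_compose_C1[OF D(1) F])
    then show ?thesis by (simp add: integrable_continuous_real)
  qed
  have "((\<lambda>s. integral (cbox 0 1) (f s)) has_vector_derivative integral (cbox 0 1) (fx 0)) (at 0 within V)"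
    by (rule leibniz_rule_vector_derivative[OF fxd intf cfx V(3,2)])
  then have "((\<lambda>s. integral {0..1} (f s)) has_vector_derivative integral {0..1} (fx 0)) (at 0)"
    using V(1,3) at_within_open by (metis cbox_interval)
  moreover have "integral {0..1} (f s) = radial_potential c F (w + of_real s * e)" for s
    by (simp add: f_def[abs_def] p_def radial_potential_def)
  moreover have "fx 0 = (\<lambda>t. Re (F (q t) * e
        + of_real t * (Re e *\<^sub>R pu F (q t) + Im e *\<^sub>R pv F (q t)) * (w - c)))"
    by (simp add: fx_def[abs_def] p_def q_def)
  ultimately show ?thesis by simp
qed

text \<open>For the partials \<open>a, b\<close> of \<open>F\<close>, reality of \<open>a + \<i> b = 2 \<partial>F/\<partial>z\<^bsup>-\<^esup>\<close> means that
  \<open>Re (F dz)\<close> is closed, i.e. that its derivative is symmetric.\<close>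
lemma closed_form_symmetric:
  assumes "Im (a + \<i> * b) = 0"
  shows "Re ((Re d *\<^sub>R a + Im d *\<^sub>R b) * e) = Re ((Re e *\<^sub>R a + Im e *\<^sub>R b) * d)"
proof -
  have "Re b = - Im a" using assms by simp
  then show ?thesis by (simp add: algebra_simps)
qed

lemma radial_potential_derivative_integral:
  fixes F :: "complex \<Rightarrow> complex"
  assumes D: "open D" "convex D" and F: "C1_on D F" and closed: "\<And>w. w \<in> D \<Longrightarrow> Im (wzb F w) = 0"
    and c: "c \<in> D" and w: "w \<in> D"
  defines "q \<equiv> \<lambda>t. c + of_real t * (w - c)"
  shows "integral {0..1} (\<lambda>t. Re (F (q t) * e
        + of_real t * (Re e *\<^sub>R pu F (q t) + Im e *\<^sub>R pv F (q t)) * (w - c))) = Re (F w * e)"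
proof -
  have qD: "q t \<in> D" if "t \<in> {0..1}" for t
  proof -
    have "(1 - t) *\<^sub>R c + t *\<^sub>R w \<in> D" using convexD[OF D(2) c w, of "1 - t" t] that by auto
    then show ?thesis by (simp add: q_def scaleR_conv_of_real algebra_simps)
  qed
  have "((\<lambda>t. t * Re (F (q t) * e)) has_vector_derivative
      Re (F (q t) * e + of_real t * (Re e *\<^sub>R pu F (q t) + Im e *\<^sub>R pv F (q t)) * (w - c)))
      (at t within {0..1})" if t: "t \<in> {0..1}" for t
  proof -
    have "((\<lambda>s. F (c + of_real s * (w - c))) has_vector_derivative
        Re (w - c) *\<^sub>R pu F (q t) + Im (w - c) *\<^sub>R pv F (q t)) (at t within {0..1})"
      using C1_on_imp_has_derivative[OF D(1) F qD[OF t]]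
      by (intro has_vector_derivative_along_line) (simp add: q_def)
    from bounded_linear.has_vector_derivative[OF bounded_linear_Re has_vector_derivative_mult_left[OF this]]
    have "((\<lambda>s. Re (F (q s) * e)) has_vector_derivative
        Re ((Re (w - c) *\<^sub>R pu F (q t) + Im (w - c) *\<^sub>R pv F (q t)) * e)) (at t within {0..1})"
      by (simp add: q_def)
    from has_vector_derivative_mult[OF has_vector_derivative_id this]
    have "((\<lambda>t. t * Re (F (q t) * e)) has_vector_derivative
        t * Re ((Re (w - c) *\<^sub>R pu F (q t) + Im (w - c) *\<^sub>R pv F (q t)) * e) + 1 * Re (F (q t) * e))
        (at t within {0..1})" .
    moreover have "Im (pu F (q t) + \<i> * pv F (q t)) = 0"
      using closed[OF qD[OF t]] by (simp add: wzb_def)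
    note sym = closed_form_symmetric[OF this, of "w - c" e]
    have re: "Re (a + of_real t * b) = Re a + t * Re b" for a b :: complex by simp
    have "t * Re ((Re (w - c) *\<^sub>R pu F (q t) + Im (w - c) *\<^sub>R pv F (q t)) * e) + 1 * Re (F (q t) * e)
        = Re (F (q t) * e + of_real t * (Re e *\<^sub>R pu F (q t) + Im e *\<^sub>R pv F (q t)) * (w - c))"
      unfolding mult.assoc re sym by simp
    ultimately show ?thesis by metis
  qed
  then have "((\<lambda>t. Re (F (q t) * e + of_real t * (Re e *\<^sub>R pu F (q t) + Im e *\<^sub>R pv F (q t)) * (w - c)))
      has_integral (1 * Re (F (q 1) * e) - 0 * Re (F (q 0) * e))) {0..1}"
    by (intro fundamental_theorem_of_calculus) auto
  then show ?thesis by (simp add: q_def integral_unique)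
qed

lemma exists_potential_convex:
  fixes F :: "complex \<Rightarrow> complex"
  assumes D: "open D" "convex D" and F: "C1_on D F" and closed: "\<And>w. w \<in> D \<Longrightarrow> Im (wzb F w) = 0"
  shows "\<exists>U. \<forall>w\<in>D. (U has_derivative (\<lambda>h. Re (F w * h))) (at w)"
proof (cases "D = {}")
  case False
  then obtain c where c: "c \<in> D" by blast
  define U where "U = radial_potential c F"
  have line: "((\<lambda>s. U (w + of_real s * e)) has_vector_derivative Re (F w * e)) (at 0)" if "w \<in> D" for w e
    using radial_potential_line_derivative[OF D F c that, of e]
      radial_potential_derivative_integral[OF D F closed c that, of e] by (simp add: U_def)
  have pU: "pu U w = Re (F w)" "pv U w = Re (F w * \<i>)" if "w \<in> D" for w
    using line[OF that, of 1] line[OF that, of \<i>]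
    by (simp_all add: pu_def pv_def vector_derivative_at mult.commute)
  have cF: "continuous_on D F" by (rule C1_on_imp_continuous_on[OF D(1) F])
  have "continuous_on D (pu U)"
    by (rule continuous_on_eq[of D "\<lambda>w. Re (F w)"]) (simp_all add: pU continuous_intros cF)
  moreover have "continuous_on D (pv U)"
    by (rule continuous_on_eq[of D "\<lambda>w. Re (F w * \<i>)"]) (simp_all add: pU continuous_intros cF)
  moreover have "(\<lambda>t::real. U (w + of_real t)) differentiable (at 0)"
    "(\<lambda>t::real. U (w + \<i> * of_real t)) differentiable (at 0)" if "w \<in> D" for w
    using line[OF that, of 1] line[OF that, of \<i>]
    by (auto simp: differentiable_def has_vector_derivative_def mult.commute)
  ultimately have "C1_on D U" by (simp add: C1_on_def)
  have "(U has_derivative (\<lambda>h. Re (F w * h))) (at w)" if "w \<in> D" for w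
  proof -
    have "(\<lambda>h. Re h *\<^sub>R pu U w + Im h *\<^sub>R pv U w) = (\<lambda>h. Re (F w * h))"
      by (rule ext) (simp add: pU[OF that] algebra_simps)
    with C1_on_imp_has_derivative[OF D(1) \<open>C1_on D U\<close> that] show ?thesis by simp
  qed
  then show ?thesis by blast
qed simp

lemma C1_on_compose_holomorphic:
  fixes F \<Phi> :: "complex \<Rightarrow> complex"
  assumes D: "open D" and \<Omega>: "open \<Omega>" and \<Phi>: "\<Phi> holomorphic_on D" "\<Phi> ` D \<subseteq> \<Omega>" and F: "C1_on \<Omega> F"
  shows "C1_on D (\<lambda>w. F (\<Phi> w))"
    and "w \<in> D \<Longrightarrow> wzb (\<lambda>w. F (\<Phi> w)) w = wzb F (\<Phi> w) * cnj (deriv \<Phi> w)"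
proof -
  define DF where "DF = (\<lambda>w h. Re (deriv \<Phi> w * h) *\<^sub>R pu F (\<Phi> w) + Im (deriv \<Phi> w * h) *\<^sub>R pv F (\<Phi> w))"
  have d: "((\<lambda>w. F (\<Phi> w)) has_derivative DF w) (at w)" if "w \<in> D" for w
  proof -
    have "\<Phi> w \<in> \<Omega>" using \<Phi>(2) that by blast
    from has_derivative_compose[OF holomorphic_derivI[OF \<Phi>(1) D that, unfolded has_field_derivative_def]
        C1_on_imp_has_derivative[OF \<Omega> F this]]
    show ?thesis by (simp only: DF_def)
  qed
  have "continuous_on D (\<lambda>w. pu F (\<Phi> w))" "continuous_on D (\<lambda>w. pv F (\<Phi> w))"
    using F \<Phi>(2) continuous_on_compose2[OF _ holomorphic_on_imp_continuous_on[OF \<Phi>(1)]]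
    by (auto simp: C1_on_def)
  moreover have "continuous_on D (deriv \<Phi>)"
    by (rule holomorphic_on_imp_continuous_on[OF holomorphic_deriv[OF \<Phi>(1) D]])
  ultimately show "C1_on D (\<lambda>w. F (\<Phi> w))"
    by (intro has_derivative_imp_C1_on[OF D d]) (auto simp: DF_def intro!: continuous_intros)
  show "wzb (\<lambda>w. F (\<Phi> w)) w = wzb F (\<Phi> w) * cnj (deriv \<Phi> w)" if "w \<in> D"
    unfolding wzb_def partials_of_derivative[OF d[OF that]]
    by (simp add: DF_def scaleR_conv_of_real complex_eq_iff algebra_simps)
qed

lemma C1_on_pullback_form:
  fixes F \<Phi> :: "complex \<Rightarrow> complex"
  assumes D: "open D" and \<Omega>: "open \<Omega>" and \<Phi>: "\<Phi> holomorphic_on D" "\<Phi> ` D \<subseteq> \<Omega>" and F: "C1_on \<Omega> F"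
  shows "C1_on D (\<lambda>w. F (\<Phi> w) * deriv \<Phi> w)"
    and "w \<in> D \<Longrightarrow> wzb (\<lambda>w. F (\<Phi> w) * deriv \<Phi> w) w = wzb F (\<Phi> w) * of_real ((cmod (deriv \<Phi> w))\<^sup>2)"
proof -
  note FPhi = C1_on_compose_holomorphic[OF assms]
  have d\<Phi>: "deriv \<Phi> holomorphic_on D" by (rule holomorphic_deriv[OF \<Phi>(1) D])
  show "C1_on D (\<lambda>w. F (\<Phi> w) * deriv \<Phi> w)" by (rule C1_on_mult_holomorphic(1)[OF D FPhi(1) d\<Phi>])
  show "wzb (\<lambda>w. F (\<Phi> w) * deriv \<Phi> w) w = wzb F (\<Phi> w) * of_real ((cmod (deriv \<Phi> w))\<^sup>2)" if "w \<in> D"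
    unfolding complex_norm_square
    using C1_on_mult_holomorphic(2)[OF D FPhi(1) d\<Phi> that] FPhi(2)[OF that] by (simp add: mult_ac)
qed

lemma deriv_inverse_mult:
  assumes "open \<Omega>" "z \<in> \<Omega>" "\<Phi> holomorphic_on D" "open D" "\<Psi> holomorphic_on \<Omega>"
    "\<Psi> z \<in> D" "\<And>z. z \<in> \<Omega> \<Longrightarrow> \<Phi> (\<Psi> z) = z"
  shows "deriv \<Phi> (\<Psi> z) * deriv \<Psi> z = 1"
proof -
  have "(\<Psi> has_field_derivative deriv \<Psi> z) (at z)"
    by (rule holomorphic_derivI[OF assms(5,1,2)])
  moreover have "(\<Phi> has_field_derivative deriv \<Phi> (\<Psi> z)) (at (\<Psi> z))"
    by (rule holomorphic_derivI[OF assms(3,4,6)])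
  ultimately have "((\<Phi> \<circ> \<Psi>) has_field_derivative deriv \<Phi> (\<Psi> z) * deriv \<Psi> z) (at z)"
    using DERIV_chain by blast
  then have "((\<lambda>z. z) has_field_derivative deriv \<Phi> (\<Psi> z) * deriv \<Psi> z) (at z)"
    using has_field_derivative_transform_within_open[OF _ assms(1,2)] assms(7) by simp
  then show ?thesis using DERIV_unique[OF _ DERIV_ident] by blast
qed

text \<open>A potential of the pulled-back form \<open>Re ((F \<circ> \<Phi>) \<Phi>' dw)\<close> on the convex domain, composed
  with \<open>\<Psi> = \<Phi>\<^sup>-\<^sup>1\<close>, is a potential of \<open>Re (F dz)\<close>.\<close>
lemma exists_potential_biholomorphic:
  fixes F :: "complex \<Rightarrow> complex"
  assumes \<Omega>: "open \<Omega>" and D: "open D" "convex D"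
    and \<Phi>: "\<Phi> holomorphic_on D" and \<Psi>: "\<Psi> holomorphic_on \<Omega>"
    and \<Psi>\<Phi>: "\<And>z. z \<in> \<Omega> \<Longrightarrow> \<Psi> z \<in> D \<and> \<Phi> (\<Psi> z) = z"
    and \<Phi>\<Psi>: "\<And>w. w \<in> D \<Longrightarrow> \<Phi> w \<in> \<Omega>"
    and F: "C1_on \<Omega> F" and closed: "\<And>z. z \<in> \<Omega> \<Longrightarrow> Im (wzb F z) = 0"
  shows "\<exists>x. \<forall>z\<in>\<Omega>. (x has_derivative (\<lambda>h. Re (F z * h))) (at z)"
proof -
  have img: "\<Phi> ` D \<subseteq> \<Omega>" using \<Phi>\<Psi> by auto
  obtain U where U: "\<And>w. w \<in> D \<Longrightarrow> (U has_derivative (\<lambda>h. Re (F (\<Phi> w) * deriv \<Phi> w * h))) (at w)"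
    using exists_potential_convex[OF D C1_on_pullback_form(1)[OF D(1) \<Omega> \<Phi> img F]]
      C1_on_pullback_form(2)[OF D(1) \<Omega> \<Phi> img F] closed \<Phi>\<Psi> by fastforce
  have "((\<lambda>z. U (\<Psi> z)) has_derivative (\<lambda>h. Re (F z * h))) (at z)" if z: "z \<in> \<Omega>" for z
  proof -
    from has_derivative_compose[OF holomorphic_derivI[OF \<Psi> \<Omega> z, unfolded has_field_derivative_def]
        U[of "\<Psi> z"]]
    have "((\<lambda>z. U (\<Psi> z)) has_derivative
        (\<lambda>h. Re (F (\<Phi> (\<Psi> z)) * deriv \<Phi> (\<Psi> z) * (deriv \<Psi> z * h)))) (at z)"
      using \<Psi>\<Phi>[OF z] by (simp only:)
    moreover have "F (\<Phi> (\<Psi> z)) * deriv \<Phi> (\<Psi> z) * (deriv \<Psi> z * h) = F z * h" for h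
    proof -
      have "deriv \<Phi> (\<Psi> z) * deriv \<Psi> z = 1"
        using deriv_inverse_mult[OF \<Omega> z \<Phi> D(1) \<Psi>] \<Psi>\<Phi> z by blast
      then show ?thesis using \<Psi>\<Phi>[OF z] by (simp add: mult.assoc[symmetric])
    qed
    ultimately show ?thesis by simp
  qed
  then show ?thesis by blast
qed

lemma exists_potential_simply_connected:
  fixes F :: "complex \<Rightarrow> complex"
  assumes \<Omega>: "open \<Omega>" "simply_connected \<Omega>"
    and F: "C1_on \<Omega> F" and closed: "\<And>z. z \<in> \<Omega> \<Longrightarrow> Im (wzb F z) = 0"
  shows "\<exists>x. \<forall>z\<in>\<Omega>. (x has_derivative (\<lambda>h. Re (F z * h))) (at z)"
proof -
  consider "\<Omega> = {}" | "\<Omega> = UNIV"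
    | f g where "f holomorphic_on \<Omega>" "g holomorphic_on ball 0 1"
        "\<And>z. z \<in> \<Omega> \<Longrightarrow> f z \<in> ball 0 1 \<and> g (f z) = z" "\<And>z. z \<in> ball 0 1 \<Longrightarrow> g z \<in> \<Omega> \<and> f (g z) = z"
    using simply_connected_eq_biholomorphic_to_disc[OF \<Omega>(1)] \<Omega>(2) by blast
  then show ?thesis
  proof cases
    case 2
    show ?thesis
      by (rule exists_potential_biholomorphic[OF \<Omega>(1) open_UNIV convex_UNIV holomorphic_on_id
            holomorphic_on_id _ _ F closed]) (use 2 in auto)
  next
    case 3
    show ?thesis
      by (rule exists_potential_biholomorphic[OF \<Omega>(1) open_ball convex_ball 3(2,1) _ _ F closed])
        (use 3(3,4) in auto)
  qed simp
qed

section \<open>Real functions with prescribed \<open>\<partial>/\<partial>z\<close>-derivative\<close>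

lemma potential_wirtinger:
  fixes F :: "complex \<Rightarrow> complex" and x :: "complex \<Rightarrow> real"
  assumes S: "open S" and F: "C1_on S F"
    and x: "\<And>z. z \<in> S \<Longrightarrow> (x has_derivative (\<lambda>h. Re (F z * h))) (at z)"
  shows "C2_on S x"
    and "z \<in> S \<Longrightarrow> wz (cr x) z = F z / 2"
    and "z \<in> S \<Longrightarrow> wz (wzb (cr x)) z = cnj (wzb F z) / 2"
proof -
  have px: "pu x z = Re (F z)" "pv x z = - Im (F z)" if "z \<in> S" for z
    using partials_of_derivative[OF x[OF that]] by simp_all
  have cF: "continuous_on S F" by (rule C1_on_imp_continuous_on[OF S F])
  have "continuous_on S (\<lambda>z. Re (F z * 1))" "continuous_on S (\<lambda>z. Re (F z * \<i>))"
    by (intro continuous_intros cF)+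
  from has_derivative_imp_C1_on[OF S x this] have C1x: "C1_on S x" .
  have "C1_on S (pu x)"
    by (rule C1_on_cong[OF S _ C1_on_bounded_linear(1)[OF bounded_linear_Re S F]]) (simp add: px)
  moreover have "C1_on S (pv x)"
    by (rule C1_on_cong[OF S _ C1_on_bounded_linear(1)[OF bounded_linear_minus[OF bounded_linear_Im] S F]])
      (simp add: px)
  ultimately
  show "C2_on S x" using C1x by (simp add: C2_on_def)
  show "wz (cr x) z = F z / 2" if "z \<in> S"
    using wirtinger_real(1)[OF S C1x that] px[OF that] by (simp add: complex_eq_iff)
  show "wz (wzb (cr x)) z = cnj (wzb F z) / 2" if z: "z \<in> S"
  proof -
    have L: "bounded_linear (\<lambda>c. cnj c / 2)"
      by (rule bounded_linear_compose[OF bounded_linear_divide bounded_linear_cnj])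
    have "wzb (cr x) w = cnj (F w) / 2" if "w \<in> S" for w
      using wirtinger_real(2)[OF S C1x that] px[OF that] by (simp add: complex_eq_iff)
    then have pw: "pu (wzb (cr x)) z = cnj (pu F z) / 2" "pv (wzb (cr x)) z = cnj (pv F z) / 2"
      using partials_cong[OF S z, of "wzb (cr x)" "\<lambda>w. cnj (F w) / 2"] C1_on_bounded_linear(2,3)[OF L S F z]
      by simp_all
    show ?thesis unfolding wz_def wzb_def pw by (simp add: field_simps)
  qed
qed

text \<open>The function is a potential of the closed form \<open>Re (2 f dz)\<close>.\<close>
lemma exists_real_with_wz:
  fixes f :: "complex \<Rightarrow> complex"
  assumes S: "open S" "simply_connected S" and f: "C1_on S f"
    and real: "\<And>z. z \<in> S \<Longrightarrow> Im (wzb f z) = 0"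
  shows "\<exists>x. C2_on S x \<and> (\<forall>z\<in>S. wz (cr x) z = f z) \<and> (\<forall>z\<in>S. wz (wzb (cr x)) z = wzb f z)"
proof -
  have "(\<lambda>z. 2) holomorphic_on S" by simp
  note F = C1_on_mult_holomorphic[OF S(1) f this]
  have "Im (wzb (\<lambda>z. f z * 2) z) = 0" if "z \<in> S" for z
    using F(2)[OF that] real[OF that] by simp
  then obtain x where x: "\<And>z. z \<in> S \<Longrightarrow> (x has_derivative (\<lambda>h. Re (f z * 2 * h))) (at z)"
    using exists_potential_simply_connected[OF S F(1)] by blast
  have P: "C2_on S x" "\<And>z. z \<in> S \<Longrightarrow> wz (cr x) z = f z * 2 / 2"
    "\<And>z. z \<in> S \<Longrightarrow> wz (wzb (cr x)) z = cnj (wzb (\<lambda>z. f z * 2) z) / 2"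
    using potential_wirtinger[of S "\<lambda>z. f z * 2" x] S(1) F(1) x by auto
  have "wz (wzb (cr x)) z = wzb f z" if "z \<in> S" for z
    using P(3)[OF that] F(2)[OF that] real[OF that] by (simp add: complex_eq_iff)
  with P(1,2) show ?thesis by auto
qed

lemma exists_real_with_wz_combination:
  fixes A B :: "complex \<Rightarrow> real" and p q :: "complex \<Rightarrow> complex"
  assumes S: "open S" "simply_connected S" and A: "C2_on S A" and B: "C2_on S B"
    and p: "p holomorphic_on S" and q: "q holomorphic_on S"
    and real: "\<And>z. z \<in> S \<Longrightarrow> Im (wz (wzb (cr A)) z * p z + wz (wzb (cr B)) z * q z) = 0"
  shows "\<exists>x. C2_on S x
    \<and> (\<forall>z\<in>S. wz (cr x) z = wz (cr A) z * p z + wz (cr B) z * q z)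
    \<and> (\<forall>z\<in>S. wz (wzb (cr x)) z = wz (wzb (cr A)) z * p z + wz (wzb (cr B)) z * q z)"
proof -
  note Ap = C1_on_mult_holomorphic[OF S(1) C1_on_wz_real[OF S(1) A] p]
  note Bq = C1_on_mult_holomorphic[OF S(1) C1_on_wz_real[OF S(1) B] q]
  note f = C1_on_add[OF S(1) Ap(1) Bq(1)]
  have wzb_f: "wzb (\<lambda>z. wz (cr A) z * p z + wz (cr B) z * q z) z
      = wz (wzb (cr A)) z * p z + wz (wzb (cr B)) z * q z" if "z \<in> S" for z
  proof -
    have "wzb (wz (cr A)) z = wz (wzb (cr A)) z" "wzb (wz (cr B)) z = wz (wzb (cr B)) z"
      using wirtinger_laplacian[OF S(1) A that] wirtinger_laplacian[OF S(1) B that] by (simp_all only:)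
    then show ?thesis using f(2)[OF that] Ap(2)[OF that] Bq(2)[OF that] by simp
  qed
  then obtain x where "C2_on S x" "\<forall>z\<in>S. wz (cr x) z = wz (cr A) z * p z + wz (cr B) z * q z"
    "\<forall>z\<in>S. wz (wzb (cr x)) z = wzb (\<lambda>z. wz (cr A) z * p z + wz (cr B) z * q z) z"
    using exists_real_with_wz[OF S f(1)] real by auto
  with wzb_f show ?thesis by auto
qed

lemma wz_eq_imp_eq_plus_const:
  fixes x y :: "complex \<Rightarrow> real"
  assumes S: "open S" "connected S" and x: "C1_on S x" and y: "C1_on S y"
    and eq: "\<And>z. z \<in> S \<Longrightarrow> wz (cr y) z = wz (cr x) z"
  shows "\<exists>c. \<forall>z\<in>S. y z = x z + c"
proof (cases "S = {}")
  case False
  then obtain z0 where z0: "z0 \<in> S" by blast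
  have "pu y z = pu x z" "pv y z = pv x z" if "z \<in> S" for z
    using eq[OF that] wirtinger_real(1)[OF S(1) y that] wirtinger_real(1)[OF S(1) x that]
    by (simp_all add: complex_eq_iff)
  then have d0: "((\<lambda>w. y w - x w) has_derivative (\<lambda>h. 0)) (at z)" if "z \<in> S" for z
    using has_derivative_diff[OF C1_on_imp_has_derivative[OF S(1) y that]
        C1_on_imp_has_derivative[OF S(1) x that]] that by simp
  have "y z - x z = y z0 - x z0" if "z \<in> S" for z
    by (rule has_derivative_zero_unique_connected[OF S d0 that z0])
  then show ?thesis by (intro exI[of _ "y z0 - x z0"]) (auto simp: algebra_simps)
qed simp

lemma Xz_eq_imp_eq_plus_const:
  assumes S: "open S" "connected S"
    and "C1_on S x1" "C1_on S x2" "C1_on S x3" "C1_on S x4"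
    and "C1_on S y1" "C1_on S y2" "C1_on S y3" "C1_on S y4"
    and eq: "\<And>z. z \<in> S \<Longrightarrow> Xz y1 y2 y3 y4 z = Xz x1 x2 x3 x4 z"
  shows "\<exists>c1 c2 c3 c4. \<forall>z\<in>S. y1 z = x1 z + c1 \<and> y2 z = x2 z + c2 \<and> y3 z = x3 z + c3 \<and> y4 z = x4 z + c4"
proof -
  have "wz (cr y1) z = wz (cr x1) z" "wz (cr y2) z = wz (cr x2) z"
    "wz (cr y3) z = wz (cr x3) z" "wz (cr y4) z = wz (cr x4) z" if "z \<in> S" for z
    using eq[OF that] by (simp_all add: Xz_def)
  then obtain c1 c2 c3 c4 where "\<forall>z\<in>S. y1 z = x1 z + c1" "\<forall>z\<in>S. y2 z = x2 z + c2"
    "\<forall>z\<in>S. y3 z = x3 z + c3" "\<forall>z\<in>S. y4 z = x4 z + c4"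
    using wz_eq_imp_eq_plus_const[OF S] assms(3-10) by (metis (no_types))
  then show ?thesis by blast
qed

section \<open>The representation formula\<close>

text \<open>\<open>weierstrass_vec (g z) a b\<close> is the prescribed \<open>X\<^sub>z\<close> with \<open>a, b\<close> in place of \<open>A\<^sub>z, B\<^sub>z\<close>.
  Because its coefficients are holomorphic, \<open>X\<^sub>z\<^sub>z\<^sub>b\<^sub>a\<^sub>r\<close> is of the same form, with the
  mixed second derivatives of \<open>A, B\<close> as \<open>a, b\<close>.\<close>
definition weierstrass_vec :: "complex \<Rightarrow> complex \<Rightarrow> complex \<Rightarrow> c4" where
  "weierstrass_vec w a b =
    (a * ((1/2) * (1/w - w)) + b * ((1/2) * (1/w + w)),
     a * ((\<i>/2) * (1/w + w)) + b * ((\<i>/2) * (1/w - w)), a, b)"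

lemma Xz_rhs_eq_weierstrass_vec: "Xz_rhs g A B z = weierstrass_vec (g z) (wz (cr A) z) (wz (cr B) z)"
  by (simp add: Xz_rhs_def weierstrass_vec_def Let_def)

lemma lor_weierstrass_vec_self:
  assumes "w \<noteq> 0"
  shows "lor (weierstrass_vec w a b) (weierstrass_vec w a b) = 0"
  using assms by (simp add: weierstrass_vec_def field_simps)

lemma lor_weierstrass_vec_Gvec:
  assumes "g z \<noteq> 0"
  shows "lor (weierstrass_vec (g z) a b) (Gvec g z) = 0"
proof -
  define w where "w = g z"
  have lor_W: "lor (weierstrass_vec w a b) (w + W, - \<i> * (w - W), w * W - 1, w * W + 1) = 0" for W
    using assms by (simp add: w_def weierstrass_vec_def field_simps)
  have "Gvec g z = (w + cnj w, - \<i> * (w - cnj w), w * cnj w - 1, w * cnj w + 1)"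
    unfolding Gvec_def w_def[symmetric] of_real_add of_real_minus of_real_1 complex_norm_square
    by (simp add: complex_eq_iff)
  then show ?thesis unfolding w_def[symmetric] by (simp only: lor_W)
qed

lemma metric_weierstrass_vec:
  assumes "g z \<noteq> 0"
  shows "2 * lor (weierstrass_vec (g z) a b) (cnj4 (weierstrass_vec (g z) a b))
    = of_real ((cmod (g z) + 1 / cmod (g z))\<^sup>2 * (cmod (a - of_real (kappa g z) * b))\<^sup>2)"
proof -
  define w where "w = g z"
  define M where "M = (cmod w)\<^sup>2"
  have w0: "w \<noteq> 0" using assms by (simp add: w_def)
  then have M0: "M > 0" by (simp add: M_def)
  have wM: "w * cnj w = of_real M" unfolding M_def by (rule complex_norm_square[symmetric])
  have "2 * lor (weierstrass_vec w a b) (A * ((1/2) * (1/W - W)) + B * ((1/2) * (1/W + W)),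
      A * ((-\<i>/2) * (1/W + W)) + B * ((-\<i>/2) * (1/W - W)), A, B)
    = ((w*W + 1) * a - (w*W - 1) * b) * ((w*W + 1) * A - (w*W - 1) * B) / (w * W)"
    if "W \<noteq> 0" for A B W
    using w0 that by (simp add: weierstrass_vec_def field_simps)
  from this[of "cnj w" "cnj a" "cnj b"] w0
  have "2 * lor (weierstrass_vec w a b) (cnj4 (weierstrass_vec w a b))
    = ((of_real M + 1) * a - (of_real M - 1) * b) * cnj ((of_real M + 1) * a - (of_real M - 1) * b) / of_real M"
    by (simp add: weierstrass_vec_def wM)
  also have "(of_real M + 1) * a - (of_real M - 1) * b = of_real (M + 1) * (a - of_real (kappa g z) * b)"
  proof -
    have "kappa g z = (M - 1) / (M + 1)" by (simp add: kappa_def M_def w_def)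
    moreover have "complex_of_real (M + 1) \<noteq> 0" using M0 by (simp del: of_real_add)
    ultimately show ?thesis by (simp add: field_simps)
  qed
  also have "\<dots> * cnj \<dots> / of_real M = of_real ((M + 1)\<^sup>2 / M * (cmod (a - of_real (kappa g z) * b))\<^sup>2)"
    unfolding of_real_mult of_real_divide complex_norm_square
    by (simp add: power2_eq_square mult_ac)
  also have "(M + 1)\<^sup>2 / M = (cmod w + 1 / cmod w)\<^sup>2"
    using M0 by (simp add: M_def field_simps power2_eq_square)
  finally show ?thesis by (simp add: w_def)
qed

lemma kappa_combination_alg:
  fixes w W :: complex
  assumes "w \<noteq> 0" "w * W + 1 \<noteq> 0"
  shows "(w * W - 1) / (w * W + 1) * (1/w - w) + (1/w + w) = 2 * (w + W) / (w * W + 1)"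
    and "(w * W - 1) / (w * W + 1) * (\<i> * (1/w + w)) + \<i> * (1/w - w) = 2 * (\<i> * (W - w)) / (w * W + 1)"
proof -
  define V where "V = 1 / w"
  have Vw: "w * V = 1" using assms(1) by (simp add: V_def)
  have "(w * W - 1) / (w * W + 1) * (V - w) + (V + w)
      = ((w * W - 1) * (V - w) + (V + w) * (w * W + 1)) / (w * W + 1)"
    "(w * W - 1) / (w * W + 1) * (\<i> * (V + w)) + \<i> * (V - w)
      = ((w * W - 1) * (\<i> * (V + w)) + \<i> * (V - w) * (w * W + 1)) / (w * W + 1)"
    using assms(2) by (simp_all add: field_simps)
  moreover have "(w * W - 1) * (V - w) + (V + w) * (w * W + 1) = 2 * W * (w * V) + 2 * w"
    "(w * W - 1) * (\<i> * (V + w)) + \<i> * (V - w) * (w * W + 1) = 2 * \<i> * W * (w * V) - 2 * \<i> * w"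
    by (simp_all add: algebra_simps)
  ultimately show "(w * W - 1) / (w * W + 1) * (1/w - w) + (1/w + w) = 2 * (w + W) / (w * W + 1)"
    "(w * W - 1) / (w * W + 1) * (\<i> * (1/w + w)) + \<i> * (1/w - w) = 2 * (\<i> * (W - w)) / (w * W + 1)"
    unfolding V_def[symmetric] Vw by (simp_all add: algebra_simps)
qed

lemma kappa_weierstrass_real:
  assumes "g z \<noteq> 0" and "Im b = 0"
  shows "Im (of_real (kappa g z) * b * ((1/2) * (1/g z - g z)) + b * ((1/2) * (1/g z + g z))) = 0"
    and "Im (of_real (kappa g z) * b * ((\<i>/2) * (1/g z + g z)) + b * ((\<i>/2) * (1/g z - g z))) = 0"
proof -
  define w where "w = g z"
  define r where "r = Re b"
  have w0: "w \<noteq> 0" using assms(1) by (simp add: w_def)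
  have b: "b = of_real r" using assms(2) by (simp add: r_def complex_eq_iff)
  have N: "w * cnj w + 1 = of_real ((cmod w)\<^sup>2 + 1)"
    by (simp only: of_real_add of_real_1 complex_norm_square)
  have "(cmod w)\<^sup>2 + 1 > 0" by (intro add_nonneg_pos) simp_all
  with N have N0: "w * cnj w + 1 \<noteq> 0" by (metis of_real_eq_0_iff less_irrefl)
  have k: "of_real (kappa g z) = (w * cnj w - 1) / (w * cnj w + 1)"
    unfolding kappa_def w_def[symmetric] of_real_divide of_real_add of_real_minus of_real_1
      complex_norm_square by (simp add: algebra_simps)
  have e: "of_real (kappa g z) * b * ((1/2) * (1/w - w)) + b * ((1/2) * (1/w + w))
      = b / 2 * (of_real (kappa g z) * (1/w - w) + (1/w + w))"
    "of_real (kappa g z) * b * ((\<i>/2) * (1/w + w)) + b * ((\<i>/2) * (1/w - w))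
      = b / 2 * (of_real (kappa g z) * (\<i> * (1/w + w)) + \<i> * (1/w - w))"
    using w0 by (simp_all add: field_simps)
  have c: "w + cnj w = of_real (2 * Re w)" "\<i> * (cnj w - w) = of_real (2 * Im w)"
    by (simp_all add: complex_add_cnj complex_eq_iff)
  show "Im (of_real (kappa g z) * b * ((1/2) * (1/g z - g z)) + b * ((1/2) * (1/g z + g z))) = 0"
    "Im (of_real (kappa g z) * b * ((\<i>/2) * (1/g z + g z)) + b * ((\<i>/2) * (1/g z - g z))) = 0"
    unfolding w_def[symmetric] e unfolding k kappa_combination_alg[OF w0 N0] unfolding c N b by simp_all
qed

lemma conformal_spacelike_immersion_weierstrass:
  assumes g: "\<And>z. z \<in> S \<Longrightarrow> g z \<noteq> 0"
    and X: "\<And>z. z \<in> S \<Longrightarrow> Xz x1 x2 x3 x4 z = weierstrass_vec (g z) (a z) (b z)"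
    and nondeg: "\<And>z. z \<in> S \<Longrightarrow> a z \<noteq> of_real (kappa g z) * b z"
  shows "conformal_spacelike_immersion S x1 x2 x3 x4"
  unfolding conformal_spacelike_immersion_def
proof (intro ballI conjI)
  fix z assume z: "z \<in> S"
  have Lam: "Lam x1 x2 x3 x4 z
      = of_real ((cmod (g z) + 1 / cmod (g z))\<^sup>2 * (cmod (a z - of_real (kappa g z) * b z))\<^sup>2)"
    unfolding Lam_def X[OF z] by (rule metric_weierstrass_vec[of g z, OF g[OF z]])
  show "lor (Xz x1 x2 x3 x4 z) (Xz x1 x2 x3 x4 z) = 0"
    unfolding X[OF z] by (rule lor_weierstrass_vec_self[OF g[OF z]])
  show "Im (Lam x1 x2 x3 x4 z) = 0" unfolding Lam by simp
  have "cmod (g z) + 1 / cmod (g z) > 0" "cmod (a z - of_real (kappa g z) * b z) > 0"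
    using g[OF z] nondeg[OF z] by (auto intro!: add_pos_pos)
  then show "Re (Lam x1 x2 x3 x4 z) > 0" unfolding Lam by simp
qed

lemma marginally_trapped_weierstrass:
  assumes g: "\<And>z. z \<in> S \<Longrightarrow> g z \<noteq> 0"
    and X: "\<And>z. z \<in> S \<Longrightarrow> Xzzb x1 x2 x3 x4 z = weierstrass_vec (g z) (a z) (b z)"
  shows "marginally_trapped S x1 x2 x3 x4"
proof -
  have lor_scale4: "lor (scale4 c u) (scale4 c v) = c * c * lor u v" for c u v
    by (cases u; cases v) (simp add: algebra_simps)
  show ?thesis
    unfolding marginally_trapped_def Hvec_def lor_scale4
    using X lor_weierstrass_vec_self[OF g] by simp
qed

lemma exists_weierstrass_components:
  fixes A B :: "complex \<Rightarrow> real"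
  assumes \<Omega>: "open \<Omega>" "simply_connected \<Omega>" and g: "g holomorphic_on \<Omega>" "\<And>z. z \<in> \<Omega> \<Longrightarrow> g z \<noteq> 0"
    and A: "C2_on \<Omega> A" and B: "C2_on \<Omega> B"
    and AB: "\<And>z. z \<in> \<Omega> \<Longrightarrow> wz (wzb (cr A)) z = of_real (kappa g z) * wz (wzb (cr B)) z"
  shows "\<exists>x1 x2. C2_on \<Omega> x1 \<and> C2_on \<Omega> x2
    \<and> (\<forall>z\<in>\<Omega>. Xz x1 x2 A B z = weierstrass_vec (g z) (wz (cr A) z) (wz (cr B) z))
    \<and> (\<forall>z\<in>\<Omega>. Xzzb x1 x2 A B z = weierstrass_vec (g z) (wz (wzb (cr A)) z) (wz (wzb (cr B)) z))"
proof -
  have "Im (wz (wzb (cr B)) z) = 0" if "z \<in> \<Omega>" for z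
    unfolding wirtinger_laplacian(1)[OF \<Omega>(1) B that] by simp
  then have real:
    "Im (wz (wzb (cr A)) z * ((1/2) * (1/g z - g z)) + wz (wzb (cr B)) z * ((1/2) * (1/g z + g z))) = 0"
    "Im (wz (wzb (cr A)) z * ((\<i>/2) * (1/g z + g z)) + wz (wzb (cr B)) z * ((\<i>/2) * (1/g z - g z))) = 0"
    if "z \<in> \<Omega>" for z
    using kappa_weierstrass_real[of g z "wz (wzb (cr B)) z"] g(2) AB that by simp_all
  have hol: "(\<lambda>z. c * (1 / g z + d * g z)) holomorphic_on \<Omega>" for c d
    using g by (intro holomorphic_intros) auto
  obtain x1 where x1: "C2_on \<Omega> x1"
    "\<forall>z\<in>\<Omega>. wz (cr x1) z = wz (cr A) z * ((1/2) * (1/g z - g z)) + wz (cr B) z * ((1/2) * (1/g z + g z))"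
    "\<forall>z\<in>\<Omega>. wz (wzb (cr x1)) z
       = wz (wzb (cr A)) z * ((1/2) * (1/g z - g z)) + wz (wzb (cr B)) z * ((1/2) * (1/g z + g z))"
    using exists_real_with_wz_combination[OF \<Omega> A B hol[of "1/2" "-1"] hol[of "1/2" 1]] real(1) by auto
  obtain x2 where x2: "C2_on \<Omega> x2"
    "\<forall>z\<in>\<Omega>. wz (cr x2) z = wz (cr A) z * ((\<i>/2) * (1/g z + g z)) + wz (cr B) z * ((\<i>/2) * (1/g z - g z))"
    "\<forall>z\<in>\<Omega>. wz (wzb (cr x2)) z
       = wz (wzb (cr A)) z * ((\<i>/2) * (1/g z + g z)) + wz (wzb (cr B)) z * ((\<i>/2) * (1/g z - g z))"
    using exists_real_with_wz_combination[OF \<Omega> A B hol[of "\<i>/2" 1] hol[of "\<i>/2" "-1"]] real(2) by auto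
  show ?thesis
    using x1 x2 by (intro exI[of _ x1] exI[of _ x2]) (simp add: Xz_def Xzzb_def weierstrass_vec_def)
qed

theorem mainTheorem7:
  fixes \<Omega> :: "complex set" and g :: "complex \<Rightarrow> complex" and A B :: "complex \<Rightarrow> real"
  assumes "open \<Omega>" and "connected \<Omega>" and "simply_connected \<Omega>"
    and "g holomorphic_on \<Omega>" and "\<forall>z\<in>\<Omega>. g z \<noteq> 0"
    and "C2_on \<Omega> A" and "C2_on \<Omega> B"
    and "\<forall>z\<in>\<Omega>. wz (wzb (cr A)) z = of_real (kappa g z) * wz (wzb (cr B)) z"
    and "\<forall>z\<in>\<Omega>. wz (cr A) z \<noteq> of_real (kappa g z) * wz (cr B) z"
  shows "\<exists>x1 x2 x3 x4 :: complex \<Rightarrow> real.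
      C2_on \<Omega> x1 \<and> C2_on \<Omega> x2 \<and> C2_on \<Omega> x3 \<and> C2_on \<Omega> x4
    \<and> (\<forall>z\<in>\<Omega>. Xz x1 x2 x3 x4 z = Xz_rhs g A B z)
    \<and> (\<forall>y1 y2 y3 y4 :: complex \<Rightarrow> real.
          C1_on \<Omega> y1 \<and> C1_on \<Omega> y2 \<and> C1_on \<Omega> y3 \<and> C1_on \<Omega> y4
          \<and> (\<forall>z\<in>\<Omega>. Xz y1 y2 y3 y4 z = Xz_rhs g A B z)
          \<longrightarrow> (\<exists>c1 c2 c3 c4. \<forall>z\<in>\<Omega>. y1 z = x1 z + c1 \<and> y2 z = x2 z + c2
                                   \<and> y3 z = x3 z + c3 \<and> y4 z = x4 z + c4))
    \<and> conformal_spacelike_immersion \<Omega> x1 x2 x3 x4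
    \<and> marginally_trapped \<Omega> x1 x2 x3 x4
    \<and> (\<exists>c3 c4. \<forall>z\<in>\<Omega>. x3 z = A z + c3 \<and> x4 z = B z + c4)
    \<and> (\<forall>z\<in>\<Omega>. lor (Xz x1 x2 x3 x4 z) (Gvec g z) = 0)
    \<and> (\<forall>z\<in>\<Omega>. Lam x1 x2 x3 x4 z =
          of_real ((cmod (g z) + 1 / cmod (g z))^2
                   * (cmod (wz (cr A) z - of_real (kappa g z) * wz (cr B) z))^2))"
proof -
  note \<Omega> = assms(1,2) and A = assms(6) and B = assms(7)
  have g0: "\<And>z. z \<in> \<Omega> \<Longrightarrow> g z \<noteq> 0" using assms(5) by blast
  obtain x1 x2 where x: "C2_on \<Omega> x1" "C2_on \<Omega> x2"
    and Xz: "\<And>z. z \<in> \<Omega> \<Longrightarrow> Xz x1 x2 A B z = weierstrass_vec (g z) (wz (cr A) z) (wz (cr B) z)"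
    and Xzzb: "\<And>z. z \<in> \<Omega> \<Longrightarrow> Xzzb x1 x2 A B z = weierstrass_vec (g z) (wz (wzb (cr A)) z) (wz (wzb (cr B)) z)"
    using exists_weierstrass_components[OF assms(1,3,4) g0 A B] assms(8) by blast
  have C1: "C1_on \<Omega> x1" "C1_on \<Omega> x2" "C1_on \<Omega> A" "C1_on \<Omega> B"
    using x A B by (simp_all add: C2_on_def)
  have uniq: "\<forall>y1 y2 y3 y4. C1_on \<Omega> y1 \<and> C1_on \<Omega> y2 \<and> C1_on \<Omega> y3 \<and> C1_on \<Omega> y4
      \<and> (\<forall>z\<in>\<Omega>. Xz y1 y2 y3 y4 z = Xz_rhs g A B z) \<longrightarrow>
      (\<exists>c1 c2 c3 c4. \<forall>z\<in>\<Omega>. y1 z = x1 z + c1 \<and> y2 z = x2 z + c2 \<and> y3 z = A z + c3 \<and> y4 z = B z + c4)"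
    using Xz_eq_imp_eq_plus_const[OF \<Omega> C1] Xz by (simp add: Xz_rhs_eq_weierstrass_vec)
  have "conformal_spacelike_immersion \<Omega> x1 x2 A B"
    using conformal_spacelike_immersion_weierstrass[OF g0 Xz] assms(9) by blast
  moreover have "marginally_trapped \<Omega> x1 x2 A B"
    by (rule marginally_trapped_weierstrass[OF g0 Xzzb])
  ultimately show ?thesis
    using x A B Xz g0 uniq
    by (intro exI[of _ x1] exI[of _ x2] exI[of _ A] exI[of _ B])
      (auto simp: Xz_rhs_eq_weierstrass_vec Lam_def lor_weierstrass_vec_Gvec metric_weierstrass_vec)
qed

end
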